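(* Let $(X_i)_{i\in\mathbb{Z}}$ be a finite-energy process over a countable alphabet $\mathbb{X}$. Then for every $q>0$, $$\sup_{n\ge2}\mathbb{E}\left[\left(\frac{\mathbf{L}(X_{1:n})}{\log n}\right)^q\right]<\infty.$$
   Context: A stationary process is finite-energy if there are constants $c<1$ and $K$ with $P(X_{n+1:n+m}=u\mid X_{1:n}=w)\le Kc^m$ whenever $P(X_{1:n}=w)>0$, $n,m\in\mathbb{N}$. $\mathbf{L}(w):=\max\{|s|: w=x_1sy_1=x_2sy_2,\ x_1\ne x_2\}$ with $s,x_i,y_i$ finite (possibly empty) strings: the maximal length of a possibly overlapping repeat in $w$. $\log$ is natural. *)

theory Defs
  imports "HOL-Probability.Probability"
begin

definition blk :: "(int \<Rightarrow> 's \<Rightarrow> 'x) \<Rightarrow> int \<Rightarrow> nat \<Rightarrow> 's \<Rightarrow> 'x list" where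
  "blk X a n \<omega> = map (\<lambda>i. X (a + int i) \<omega>) [0..<n]"

definition maxrep :: "'x list \<Rightarrow> nat" where
  "maxrep w = Max {length s | s. \<exists>x1 y1 x2 y2. w = x1 @ s @ y1 \<and> w = x2 @ s @ y2 \<and> x1 \<noteq> x2}"

text \<open>Stationarity: all finite-dimensional (block) distributions are shift invariant.
  Over a countable alphabet these block probabilities determine the law of the process.\<close>
definition stationary_proc :: "'s measure \<Rightarrow> (int \<Rightarrow> 's \<Rightarrow> 'x) \<Rightarrow> bool" where
  "stationary_proc M X \<longleftrightarrow>
     (\<forall>t n w. measure M {\<omega> \<in> space M. blk X t n \<omega> = w} = measure M {\<omega> \<in> space M. blk X 1 n \<omega> = w})"

definition finite_energy :: "'s measure \<Rightarrow> (int \<Rightarrow> 's \<Rightarrow> 'x) \<Rightarrow> bool" where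
  "finite_energy M X \<longleftrightarrow>
     (\<exists>c K::real. c < 1 \<and>
        (\<forall>n m w u. n \<ge> 1 \<longrightarrow> m \<ge> 1 \<longrightarrow> length w = n \<longrightarrow> length u = m \<longrightarrow>
           measure M {\<omega> \<in> space M. blk X 1 n \<omega> = w} > 0 \<longrightarrow>
           measure M {\<omega> \<in> space M. blk X 1 (n + m) \<omega> = w @ u}
             / measure M {\<omega> \<in> space M. blk X 1 n \<omega> = w} \<le> K * c ^ m))"

end

theory Submission
  imports Defs
begin

text \<open>For \<open>i < j\<close>, on the event \<open>X_{i+1:i+m} = X_{j+1:j+m}\<close> the block \<open>X_{j+1:j+m}\<close> is a
  function of \<open>X_{1:j}\<close> (each of its letters copies an earlier one, also when the two
  occurrences overlap). Conditioning on \<open>X_{1:j}\<close>, finite energy bounds the probability of this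
  event by \<open>K c^m\<close>, and a union bound over the pairs \<open>i < j < n\<close> gives
  \<open>P(L(X_{1:n}) \<ge> m) \<le> n^2 K c^m\<close>. For \<open>m \<approx> a log n\<close> with \<open>a = (q + 2) / log (1/c)\<close> this is
  \<open>K n^{-q}\<close>. Since \<open>L(X_{1:n}) / log n\<close> is always at most \<open>n / log 2\<close>, and at most \<open>a\<close> off that
  event, the \<open>q\<close>-th moment is at most \<open>a^q + K / (log 2)^q\<close>.\<close>

lemma length_blk [simp]: "length (blk X a n \<omega>) = n"
  by (simp add: blk_def)

lemma nth_blk: "t < n \<Longrightarrow> blk X a n \<omega> ! t = X (a + int t) \<omega>"
  by (simp add: blk_def)

lemma blk_Suc: "blk X a (Suc n) \<omega> = blk X a n \<omega> @ [X (a + int n) \<omega>]"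
  by (simp add: blk_def)

lemma take_blk: "take n (blk X a (n + m) \<omega>) = blk X a n \<omega>"
  by (simp add: blk_def take_map)

lemma measurable_blk:
  fixes X :: "int \<Rightarrow> 's \<Rightarrow> 'x::countable"
  assumes X: "\<And>i. X i \<in> M \<rightarrow>\<^sub>M count_space UNIV"
  shows "blk X a n \<in> M \<rightarrow>\<^sub>M count_space UNIV"
proof (induction n)
  case 0
  have "blk X a 0 = (\<lambda>_. [])" by (auto simp: blk_def)
  then show ?case by simp
next
  case (Suc n)
  have preimage: "blk X a (Suc n) -` {w} \<inter> space M =
     (if w = [] then {} else (blk X a n -` {butlast w} \<inter> space M) \<inter> (X (a + int n) -` {last w} \<inter> space M))"
    for w
  proof (cases "w = []")
    case False
    then have "(v @ [x] = w) \<longleftrightarrow> (v = butlast w \<and> x = last w)" for v x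
      by (metis append_butlast_last_id butlast_snoc last_snoc)
    then show ?thesis using False by (auto simp: blk_Suc)
  qed (auto simp: blk_Suc)
  show ?case unfolding measurable_count_space_eq2_countable
  proof (intro conjI ballI)
    fix w :: "'x list"
    show "blk X a (Suc n) -` {w} \<inter> space M \<in> sets M"
      unfolding preimage using measurable_sets[OF Suc, of "{butlast w}"] measurable_sets[OF X, of "{last w}"]
      by auto
  qed auto
qed

lemma sets_Collect_blk:
  fixes X :: "int \<Rightarrow> 's \<Rightarrow> 'x::countable"
  assumes "\<And>i. X i \<in> M \<rightarrow>\<^sub>M count_space UNIV"
  shows "{\<omega> \<in> space M. P (blk X a n \<omega>)} \<in> sets M"
proof -
  have "{\<omega> \<in> space M. P (blk X a n \<omega>)} = blk X a n -` {v. P v} \<inter> space M" by auto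
  then show ?thesis using measurable_sets[OF measurable_blk[OF assms], of "{v. P v}"] by simp
qed

lemma maxrep_set_finite:
  "finite {length s | s. \<exists>x1 y1 x2 y2. w = x1 @ s @ y1 \<and> w = x2 @ s @ y2 \<and> x1 \<noteq> x2}"
  by (rule finite_subset[of _ "{..length w}"]) auto

lemma maxrep_set_nonempty:
  assumes "w \<noteq> []"
  shows "{length s | s. \<exists>x1 y1 x2 y2. w = x1 @ s @ y1 \<and> w = x2 @ s @ y2 \<and> x1 \<noteq> x2} \<noteq> {}"
proof -
  have "w = [] @ [] @ w \<and> w = [hd w] @ [] @ tl w \<and> [] \<noteq> [hd w]" using assms by simp
  then show ?thesis by blast
qed

lemma maxrep_le_length: "w \<noteq> [] \<Longrightarrow> maxrep w \<le> length w"
  unfolding maxrep_def by (rule Max.boundedI[OF maxrep_set_finite maxrep_set_nonempty]) auto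

lemma repeat_if_le_maxrep:
  assumes "w \<noteq> []" "m \<le> maxrep w"
  obtains i j where "i < j" "j + m \<le> length w" "\<forall>k<m. w ! (i + k) = w ! (j + k)"
proof -
  have "maxrep w \<in> {length s | s. \<exists>x1 y1 x2 y2. w = x1 @ s @ y1 \<and> w = x2 @ s @ y2 \<and> x1 \<noteq> x2}"
    unfolding maxrep_def using maxrep_set_finite maxrep_set_nonempty[OF assms(1)] by (rule Max_in)
  then have "\<exists>s x1 y1 x2 y2. length s = maxrep w \<and> w = x1 @ s @ y1 \<and> w = x2 @ s @ y2 \<and> x1 \<noteq> x2"
    by (smt (verit) mem_Collect_eq)
  then obtain s x1 y1 x2 y2
    where s: "length s = maxrep w" "w = x1 @ s @ y1" "w = x2 @ s @ y2" "x1 \<noteq> x2"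
    by blast
  have "length x1 \<noteq> length x2"
  proof
    assume "length x1 = length x2"
    then have "take (length x1) w = x1" "take (length x1) w = x2" using s by auto
    then show False using s by simp
  qed
  moreover have "w ! (length x1 + k) = w ! (length x2 + k)" if "k < m" for k
  proof -
    have "(x @ s @ y) ! (length x + k) = s ! k" for x y
      using that s(1) assms(2) by (simp add: nth_append)
    then show ?thesis using s(2,3) by metis
  qed
  moreover have "length x1 + m \<le> length w" "length x2 + m \<le> length w"
    using arg_cong[OF s(2), of length] arg_cong[OF s(3), of length] s(1) assms(2) by simp_all
  ultimately show ?thesis
    using that[of "length x1" "length x2"] that[of "length x2" "length x1"]
    by (metis linorder_neqE_nat)
qed

text \<open>Letter \<open>|w| + k\<close> of \<open>copy_extend i w m\<close> is a copy of letter \<open>i + k\<close>; with \<open>|w| = j > i\<close> this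
  is how \<open>X_{1:j+m}\<close> is determined by \<open>X_{1:j}\<close> on \<open>repeat_event M X i j m\<close>.\<close>

fun copy_extend :: "nat \<Rightarrow> 'x list \<Rightarrow> nat \<Rightarrow> 'x list" where
  "copy_extend i w 0 = w"
| "copy_extend i w (Suc k) = copy_extend i w k @ [copy_extend i w k ! (i + k)]"

lemma length_copy_extend [simp]: "length (copy_extend i w k) = length w + k"
  by (induction k) auto

lemma take_copy_extend: "take (length w) (copy_extend i w k) = w"
  by (induction k) auto

lemma copy_extend_eq_append: "copy_extend i w k = w @ drop (length w) (copy_extend i w k)"
  by (metis append_take_drop_id take_copy_extend)

definition repeat_event :: "'s measure \<Rightarrow> (int \<Rightarrow> 's \<Rightarrow> 'x) \<Rightarrow> nat \<Rightarrow> nat \<Rightarrow> nat \<Rightarrow> 's set" where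
  "repeat_event M X i j m = {\<omega> \<in> space M. \<forall>k<m. X (1 + int (i + k)) \<omega> = X (1 + int (j + k)) \<omega>}"

lemma sets_repeat_event:
  fixes X :: "int \<Rightarrow> 's \<Rightarrow> 'x::countable"
  assumes "\<And>i. X i \<in> M \<rightarrow>\<^sub>M count_space UNIV"
  shows "repeat_event M X i j m \<in> sets M"
proof -
  have "repeat_event M X i j m =
      {\<omega> \<in> space M. (\<lambda>v. \<forall>k<m. v ! (i + k) = v ! (j + k)) (blk X 1 (i + j + m) \<omega>)}"
    unfolding repeat_event_def by (auto simp: nth_blk)
  then show ?thesis using sets_Collect_blk[OF assms] by simp
qed

lemma blk_eq_copy_extend:
  assumes "i < j" "\<omega> \<in> repeat_event M X i j m"
  shows "blk X 1 (j + m) \<omega> = copy_extend i (blk X 1 j \<omega>) m"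
proof -
  have "blk X 1 (j + k) \<omega> = copy_extend i (blk X 1 j \<omega>) k" if "k \<le> m" for k
    using that
  proof (induction k)
    case (Suc k)
    have "blk X 1 (j + Suc k) \<omega> = blk X 1 (j + k) \<omega> @ [X (1 + int (j + k)) \<omega>]"
      by (simp add: blk_Suc)
    also have "X (1 + int (j + k)) \<omega> = X (1 + int (i + k)) \<omega>"
      using assms(2) Suc.prems by (simp add: repeat_event_def)
    also have "\<dots> = blk X 1 (j + k) \<omega> ! (i + k)" using assms(1) by (simp add: nth_blk)
    finally show ?case using Suc by simp
  qed simp
  then show ?thesis by simp
qed

lemma repeat_event_if_le_maxrep:
  assumes "\<omega> \<in> space M" "1 \<le> n" "1 \<le> m" "m \<le> maxrep (blk X 1 n \<omega>)"
  obtains i j where "i < j" "j < n" "\<omega> \<in> repeat_event M X i j m"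
proof -
  have "blk X 1 n \<omega> \<noteq> []" using assms(2) by (metis length_blk list.size(3) not_one_le_zero)
  then obtain i j where ij: "i < j" "j + m \<le> n"
    and rep: "\<forall>k<m. blk X 1 n \<omega> ! (i + k) = blk X 1 n \<omega> ! (j + k)"
    using repeat_if_le_maxrep assms(4) by (metis length_blk)
  have "\<omega> \<in> repeat_event M X i j m"
    unfolding repeat_event_def using assms(1) ij rep by (auto simp: nth_blk)
  moreover have "j < n" using ij assms(3) by simp
  ultimately show ?thesis using that ij(1) by blast
qed

definition cylinder :: "'s measure \<Rightarrow> (int \<Rightarrow> 's \<Rightarrow> 'x) \<Rightarrow> nat \<Rightarrow> 'x list \<Rightarrow> 's set" where
  "cylinder M X n w = {\<omega> \<in> space M. blk X 1 n \<omega> = w}"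

definition energy_bounded :: "'s measure \<Rightarrow> (int \<Rightarrow> 's \<Rightarrow> 'x) \<Rightarrow> real \<Rightarrow> real \<Rightarrow> bool" where
  "energy_bounded M X c K \<longleftrightarrow>
     (\<forall>n m w u. n \<ge> 1 \<longrightarrow> m \<ge> 1 \<longrightarrow> length w = n \<longrightarrow> length u = m \<longrightarrow>
        measure M (cylinder M X n w) > 0 \<longrightarrow>
        measure M (cylinder M X (n + m) (w @ u)) / measure M (cylinder M X n w) \<le> K * c ^ m)"

lemma finite_energy_iff_energy_bounded:
  "finite_energy M X \<longleftrightarrow> (\<exists>c K. c < 1 \<and> energy_bounded M X c K)"
  by (simp add: finite_energy_def energy_bounded_def cylinder_def)

lemma sets_cylinder:
  fixes X :: "int \<Rightarrow> 's \<Rightarrow> 'x::countable"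
  assumes "\<And>i. X i \<in> M \<rightarrow>\<^sub>M count_space UNIV"
  shows "cylinder M X n w \<in> sets M"
  unfolding cylinder_def by (rule sets_Collect_blk[OF assms])

lemma cylinder_subset_take: "cylinder M X (n + k) v \<subseteq> cylinder M X n (take n v)"
  by (auto simp: cylinder_def take_blk[symmetric])

lemma cylinder_append_subset:
  "length w = n \<Longrightarrow> cylinder M X (n + m) (w @ u) \<subseteq> cylinder M X n w"
  using cylinder_subset_take[of M X n m "w @ u"] by simp

lemma disjoint_family_cylinder: "disjoint_family_on (cylinder M X n) W"
  unfolding disjoint_family_on_def cylinder_def by auto

lemma le_zero_if_le_consecutive_powers_neg:
  fixes c K r :: real
  assumes "c < 0" "r \<le> K * c ^ Suc k" "r \<le> K * c ^ k"
  shows "r \<le> 0"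
proof -
  have "(K * c ^ Suc k) * (K * c ^ k) = c * (K * c ^ k)\<^sup>2"
    by (simp add: power2_eq_square)
  also have "\<dots> \<le> 0" using assms(1) by (simp add: mult_nonpos_nonneg)
  finally have "K * c ^ Suc k \<le> 0 \<or> K * c ^ k \<le> 0"
    by (metis mult_pos_pos not_le)
  then show ?thesis using assms(2,3) by linarith
qed

lemma powr_mult_geometric_le:
  fixes a c q K :: real
  assumes c: "0 < c" "c < 1" and K: "0 \<le> K" and a: "a * ln c = - (q + 2)"
    and m: "a * ln (real n) \<le> real m" and n: "1 \<le> n"
  shows "(n / ln 2) powr q * (real n ^ 2 * (K * c ^ m)) \<le> (1 / ln 2) powr q * K"
proof -
  have "(n / ln 2) powr q * (real n ^ 2 * (K * c ^ m))
      = (1 / ln 2) powr q * K * (real n powr q * real n powr 2 * c powr m)"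
  proof -
    have "(n / ln 2) powr q = real n powr q * (1 / ln 2) powr q"
      using powr_mult[of n "1 / ln 2" q] by simp
    moreover have "real n ^ 2 = real n powr 2" "c ^ m = c powr m"
      using n c by (simp_all add: powr_numeral powr_realpow)
    ultimately show ?thesis by (simp only:) (simp add: ac_simps)
  qed
  also have "\<dots> \<le> (1 / ln 2) powr q * K * (real n powr q * real n powr 2 * c powr (a * ln (real n)))"
    using c m K by (intro mult_left_mono powr_mono') auto
  also have "c powr (a * ln (real n)) = real n powr (- (q + 2))"
    using c n a by (simp add: powr_def mult_ac)
  also have "real n powr q * real n powr 2 * real n powr (- (q + 2)) = real n powr (q + 2 + - (q + 2))"
    by (simp only: powr_add)
  also have "\<dots> = 1" using n by simp
  finally show ?thesis by simp
qed

context prob_space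
begin

lemma energy_boundedD:
  fixes X :: "int \<Rightarrow> 'a \<Rightarrow> 'x::countable"
  assumes X: "\<And>i. X i \<in> M \<rightarrow>\<^sub>M count_space UNIV" and E: "energy_bounded M X c K"
    and "0 \<le> K * c ^ m" "1 \<le> n" "1 \<le> m" "length w = n" "length u = m"
  shows "prob (cylinder M X (n + m) (w @ u)) \<le> K * c ^ m * prob (cylinder M X n w)"
proof (cases "prob (cylinder M X n w) > 0")
  case True
  then show ?thesis using E assms(3-) by (simp add: energy_bounded_def divide_le_eq)
next
  case False
  then have "prob (cylinder M X n w) = 0" by (simp add: zero_less_measure_iff)
  moreover have "prob (cylinder M X (n + m) (w @ u)) \<le> prob (cylinder M X n w)"
    by (rule finite_measure_mono[OF cylinder_append_subset sets_cylinder[OF X]]) fact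
  ultimately show ?thesis by simp
qed

text \<open>Passing to \<open>c \<ge> 1/2\<close> and \<open>K \<ge> 2\<close> makes \<open>K c^m\<close> positive. For \<open>c < 0\<close> the bounds at
  \<open>m\<close> and \<open>m - 1\<close> (the latter applies since dropping the last letter enlarges the cylinder)
  have opposite signs unless one of them is \<open>0\<close>, so the ratio vanishes for \<open>m \<ge> 2\<close>.\<close>

lemma energy_bounded_normalize:
  fixes X :: "int \<Rightarrow> 'a \<Rightarrow> 'x::countable"
  assumes X: "\<And>i. X i \<in> M \<rightarrow>\<^sub>M count_space UNIV" and E: "energy_bounded M X c K"
  shows "energy_bounded M X (max c (1/2)) (max K 2)"
  unfolding energy_bounded_def
proof (intro allI impI)
  fix n m :: nat and w u :: "'x list"
  assume n: "n \<ge> 1" and m: "m \<ge> 1" and w: "length w = n" and u: "length u = m"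
    and pos: "prob (cylinder M X n w) > 0"
  define ratio where "ratio k v = prob (cylinder M X (n + k) (w @ v)) / prob (cylinder M X n w)" for k v
  have ratio_le: "ratio k v \<le> K * c ^ k" if "k \<ge> 1" "length v = k" for k v
    using E n w that pos by (simp add: energy_bounded_def ratio_def)
  have ratio_le_take: "ratio (k + l) v \<le> ratio k (take k v)" for k l v
  proof -
    have "cylinder M X (n + k + l) (w @ v) \<subseteq> cylinder M X (n + k) (w @ take k v)"
      using cylinder_subset_take[of M X "n + k" l "w @ v"] w by simp
    then have "prob (cylinder M X (n + (k + l)) (w @ v)) \<le> prob (cylinder M X (n + k) (w @ take k v))"
      by (intro finite_measure_mono sets_cylinder[OF X]) (simp_all add: add.assoc)
    then show ?thesis unfolding ratio_def using pos by (simp add: divide_right_mono)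
  qed
  have "ratio m u \<le> max K 2 * max c (1/2) ^ m"
  proof (cases "c \<ge> 0")
    case True
    have "K * c ^ m \<le> max K 2 * max c (1/2) ^ m"
      using True by (intro mult_mono power_mono) auto
    then show ?thesis using ratio_le[OF m u] by linarith
  next
    case c_neg: False
    obtain k where k: "m = Suc k" using m by (cases m) auto
    show ?thesis
    proof (cases "k = 0")
      case True
      have "ratio m u \<le> ratio 0 (take 0 u)" using ratio_le_take[of 0 m u] by simp
      also have "\<dots> = 1" using pos by (simp add: ratio_def w)
      also have "1 \<le> max K 2 * max c (1/2) ^ m" using k True c_neg by (simp add: max_def)
      finally show ?thesis .
    next
      case False
      then have "ratio m u \<le> K * c ^ k"
        using ratio_le_take[of k 1 u] ratio_le[of k "take k u"] k u by simp
      then have "ratio m u \<le> 0"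
        using le_zero_if_le_consecutive_powers_neg[of c "ratio m u" K k] c_neg ratio_le[OF m u] k by simp
      moreover have "0 \<le> max K 2 * max c (1/2) ^ m"
        by (intro mult_nonneg_nonneg zero_le_power) auto
      ultimately show ?thesis by linarith
    qed
  qed
  then show "prob (cylinder M X (n + m) (w @ u)) / prob (cylinder M X n w) \<le> max K 2 * max c (1/2) ^ m"
    by (simp add: ratio_def)
qed

lemma prob_UN_le_if_conditional_le:
  assumes W: "countable W" and G: "disjoint_family_on G W" "\<And>w. w \<in> W \<Longrightarrow> G w \<in> events"
    and F: "\<And>w. w \<in> W \<Longrightarrow> F w \<in> events" "\<And>w. w \<in> W \<Longrightarrow> F w \<subseteq> G w"
    and FG: "\<And>w. w \<in> W \<Longrightarrow> prob (F w) \<le> C * prob (G w)" and C: "0 \<le> C"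
  shows "prob (\<Union>w\<in>W. F w) \<le> C"
proof -
  have disjF: "disjoint_family_on F W"
    using G(1) F(2) unfolding disjoint_family_on_def by blast
  have "emeasure M (\<Union>w\<in>W. F w) = (\<integral>\<^sup>+w. emeasure M (F w) \<partial>count_space W)"
    using F(1) W disjF by (rule emeasure_UN_countable)
  also have "\<dots> \<le> (\<integral>\<^sup>+w. ennreal C * emeasure M (G w) \<partial>count_space W)"
    using FG C by (intro nn_integral_mono) (simp add: emeasure_eq_measure ennreal_mult[symmetric] ennreal_leI)
  also have "\<dots> = ennreal C * (\<integral>\<^sup>+w. emeasure M (G w) \<partial>count_space W)"
    by (rule nn_integral_cmult) simp
  also have "(\<integral>\<^sup>+w. emeasure M (G w) \<partial>count_space W) = emeasure M (\<Union>w\<in>W. G w)"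
    using G(2) W G(1) by (rule emeasure_UN_countable[symmetric])
  also have "ennreal C * emeasure M (\<Union>w\<in>W. G w) \<le> ennreal C * 1"
    by (intro mult_left_mono emeasure_le_1) auto
  finally show ?thesis using C by (simp add: emeasure_eq_measure)
qed

lemma prob_repeat_event_le:
  fixes X :: "int \<Rightarrow> 'a \<Rightarrow> 'x::countable"
  assumes X: "\<And>i. X i \<in> M \<rightarrow>\<^sub>M count_space UNIV" and E: "energy_bounded M X c K"
    and "0 \<le> c" "0 \<le> K" and ij: "i < j" and m: "1 \<le> m"
  shows "prob (repeat_event M X i j m) \<le> K * c ^ m"
proof -
  define W where "W = {w :: 'x list. length w = j}"
  define F where "F w = cylinder M X (j + m) (copy_extend i w m)" for w
  have subset: "F w \<subseteq> cylinder M X j w" if "w \<in> W" for w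
    using cylinder_subset_take[of M X j m "copy_extend i w m"] that
    by (simp add: F_def W_def take_copy_extend[of w, simplified that[unfolded W_def, simplified]])
  have "prob (F w) \<le> K * c ^ m * prob (cylinder M X j w)" if "w \<in> W" for w
  proof -
    have "F w = cylinder M X (j + m) (w @ drop j (copy_extend i w m))"
      using copy_extend_eq_append[of i w m] that by (simp add: F_def W_def)
    then show ?thesis
      using energy_boundedD[OF X E] assms(3,4) ij m that by (simp add: W_def)
  qed
  then have "prob (\<Union>w\<in>W. F w) \<le> K * c ^ m"
    using subset assms(3,4)
    by (intro prob_UN_le_if_conditional_le[where G = "cylinder M X j"])
       (simp_all add: W_def F_def disjoint_family_cylinder sets_cylinder[OF X])
  moreover have "repeat_event M X i j m \<subseteq> (\<Union>w\<in>W. F w)"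
  proof
    fix \<omega> assume "\<omega> \<in> repeat_event M X i j m"
    then have "\<omega> \<in> F (blk X 1 j \<omega>)"
      using blk_eq_copy_extend[OF ij] by (simp add: F_def cylinder_def repeat_event_def)
    then show "\<omega> \<in> (\<Union>w\<in>W. F w)" unfolding W_def by (intro UN_I[of "blk X 1 j \<omega>"]) auto
  qed
  moreover have "(\<Union>w\<in>W. F w) \<in> events"
    by (auto simp: F_def W_def sets_cylinder[OF X])
  ultimately show ?thesis
    using finite_measure_mono[of "repeat_event M X i j m" "\<Union>w\<in>W. F w"] by linarith
qed

lemma prob_maxrep_ge_le:
  fixes X :: "int \<Rightarrow> 'a \<Rightarrow> 'x::countable"
  assumes X: "\<And>i. X i \<in> M \<rightarrow>\<^sub>M count_space UNIV" and E: "energy_bounded M X c K"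
    and "0 \<le> c" "0 \<le> K" "1 \<le> m" "1 \<le> n"
  shows "prob {\<omega> \<in> space M. m \<le> maxrep (blk X 1 n \<omega>)} \<le> real n ^ 2 * (K * c ^ m)"
proof -
  define S where "S = {p \<in> {..<n} \<times> {..<n}. fst p < snd p}"
  have "{\<omega> \<in> space M. m \<le> maxrep (blk X 1 n \<omega>)} \<subseteq> (\<Union>p\<in>S. repeat_event M X (fst p) (snd p) m)"
  proof
    fix \<omega> assume "\<omega> \<in> {\<omega> \<in> space M. m \<le> maxrep (blk X 1 n \<omega>)}"
    then obtain i j where "i < j" "j < n" "\<omega> \<in> repeat_event M X i j m"
      using repeat_event_if_le_maxrep[of \<omega> M n m X] assms(5,6) by blast
    then show "\<omega> \<in> (\<Union>p\<in>S. repeat_event M X (fst p) (snd p) m)"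
      unfolding S_def by (intro UN_I[of "(i, j)"]) auto
  qed
  then have "prob {\<omega> \<in> space M. m \<le> maxrep (blk X 1 n \<omega>)}
      \<le> prob (\<Union>p\<in>S. repeat_event M X (fst p) (snd p) m)"
    by (intro finite_measure_mono) (auto simp: S_def sets_repeat_event[OF X])
  also have "\<dots> \<le> (\<Sum>p\<in>S. prob (repeat_event M X (fst p) (snd p) m))"
    by (intro finite_measure_subadditive_finite) (auto simp: S_def sets_repeat_event[OF X])
  also have "\<dots> \<le> real (card S) * (K * c ^ m)"
    using prob_repeat_event_le[OF X E] assms(3-5) by (intro sum_bounded_above) (auto simp: S_def)
  also have "\<dots> \<le> real n ^ 2 * (K * c ^ m)"
  proof -
    have "card S \<le> card ({..<n} \<times> {..<n})" unfolding S_def by (intro card_mono) auto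
    then have "real (card S) \<le> real n ^ 2"
      using of_nat_mono[of "card S" "n * n"] by (simp add: power2_eq_square)
    then show ?thesis using assms(3,4) by (intro mult_right_mono) auto
  qed
  finally show ?thesis .
qed

lemma integral_le_if_bounded_off_event:
  assumes Y: "Y \<in> borel_measurable M" and A: "A \<in> events"
    and bounds: "\<And>\<omega>. \<omega> \<in> space M \<Longrightarrow> 0 \<le> Y \<omega> \<and> Y \<omega> \<le> T"
    and off_A: "\<And>\<omega>. \<omega> \<in> space M - A \<Longrightarrow> Y \<omega> \<le> b" and b: "0 \<le> b"
  shows "expectation Y \<le> b + T * prob A"
proof -
  have int_Y: "integrable M Y"
    using bounds by (intro integrable_const_bound[where B = T] AE_I2 Y) auto
  have int_A: "integrable M (\<lambda>\<omega>. T * indicator A \<omega>)"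
    using A by (intro integrable_mult_right integrable_real_indicator) (auto simp: emeasure_eq_measure)
  have int_bound: "integrable M (\<lambda>\<omega>. b + T * indicator A \<omega>)"
    using integrable_const int_A by (rule Bochner_Integration.integrable_add)
  have "Y \<omega> \<le> b + T * indicator A \<omega>" if "\<omega> \<in> space M" for \<omega>
    using bounds[OF that] off_A[of \<omega>] that b by (cases "\<omega> \<in> A") auto
  then have "expectation Y \<le> expectation (\<lambda>\<omega>. b + T * indicator A \<omega>)"
    by (rule integral_mono[OF int_Y int_bound])
  also have "\<dots> = b + T * prob A"
    using A by (simp add: Bochner_Integration.integral_add[OF integrable_const int_A] prob_space)
  finally show ?thesis .
qed

lemma expectation_maxrep_ratio_le:
  fixes X :: "int \<Rightarrow> 'a \<Rightarrow> 'x::countable"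
  assumes X: "\<And>i. X i \<in> M \<rightarrow>\<^sub>M count_space UNIV" and E: "energy_bounded M X c K"
    and c: "0 < c" "c < 1" and K: "0 \<le> K" and q: "0 < q" and n: "2 \<le> n"
  shows "expectation (\<lambda>\<omega>. (real (maxrep (blk X 1 n \<omega>)) / ln (real n)) powr q)
           \<le> ((q + 2) / - ln c) powr q + (1 / ln 2) powr q * K"
proof -
  define a where "a = (q + 2) / - ln c"
  define m where "m = nat \<lceil>a * ln (real n)\<rceil>"
  define A where "A = {\<omega> \<in> space M. m \<le> maxrep (blk X 1 n \<omega>)}"
  have ln_n: "ln 2 \<le> ln (real n)" "0 < ln (real n)" using n by auto
  have "ln c < 0" using c by simp
  then have a: "0 < a" "a * ln c = - (q + 2)" using q by (simp_all add: a_def divide_pos_neg)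
  have "0 < a * ln (real n)" using a ln_n by simp
  then have "real m = of_int \<lceil>a * ln (real n)\<rceil>" "1 \<le> m"
    unfolding m_def by (simp_all add: of_nat_nat Suc_le_eq)
  then have m: "1 \<le> m" "a * ln (real n) \<le> real m" "real m < a * ln (real n) + 1"
    using ceiling_correct[of "a * ln (real n)"] by auto
  have "(n / ln 2) powr q * prob A \<le> (n / ln 2) powr q * (real n ^ 2 * (K * c ^ m))"
    using prob_maxrep_ge_le[OF X E _ K m(1)] c n by (intro mult_left_mono) (auto simp: A_def)
  also have "\<dots> \<le> (1 / ln 2) powr q * K"
    using c K a(2) m(2) n by (intro powr_mult_geometric_le) auto
  finally have tail: "(n / ln 2) powr q * prob A \<le> (1 / ln 2) powr q * K" .
  have "expectation (\<lambda>\<omega>. (real (maxrep (blk X 1 n \<omega>)) / ln (real n)) powr q) \<le> a powr q + (n / ln 2) powr q * prob A"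
  proof (rule integral_le_if_bounded_off_event)
    show "(\<lambda>\<omega>. (real (maxrep (blk X 1 n \<omega>)) / ln (real n)) powr q) \<in> borel_measurable M"
      using measurable_compose[OF measurable_blk[OF X], of "\<lambda>v. (real (maxrep v) / ln (real n)) powr q"]
      by simp
    show "A \<in> events" unfolding A_def by (rule sets_Collect_blk[OF X])
  next
    fix \<omega> assume "\<omega> \<in> space M"
    have "blk X 1 n \<omega> \<noteq> []" using n by (metis length_blk list.size(3) not_numeral_le_zero)
    then have "real (maxrep (blk X 1 n \<omega>)) / ln (real n) \<le> n / ln 2"
      using maxrep_le_length[of "blk X 1 n \<omega>"] ln_n by (intro frac_le) auto
    then show "0 \<le> (real (maxrep (blk X 1 n \<omega>)) / ln (real n)) powr q
        \<and> (real (maxrep (blk X 1 n \<omega>)) / ln (real n)) powr q \<le> (n / ln 2) powr q"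
      using q ln_n by (auto intro: powr_mono2)
  next
    fix \<omega> assume "\<omega> \<in> space M - A"
    then have "real (maxrep (blk X 1 n \<omega>)) \<le> a * ln (real n)" using m(3) by (auto simp: A_def)
    then have "real (maxrep (blk X 1 n \<omega>)) / ln (real n) \<le> a" using ln_n by (simp add: divide_le_eq)
    then show "(real (maxrep (blk X 1 n \<omega>)) / ln (real n)) powr q \<le> a powr q"
      using q ln_n by (intro powr_mono2) auto
  qed simp
  then show ?thesis using tail by (simp add: a_def)
qed

end

theorem lemma2:
  fixes M :: "'s measure" and X :: "int \<Rightarrow> 's \<Rightarrow> 'x::countable" and q :: real
  assumes "prob_space M"
    and "\<And>i. X i \<in> M \<rightarrow>\<^sub>M count_space UNIV"
    and "stationary_proc M X"
    and "finite_energy M X"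
    and "q > 0"
  shows "\<exists>B::real. \<forall>n::nat. n \<ge> 2 \<longrightarrow>
           integral\<^sup>L M (\<lambda>\<omega>. (real (maxrep (blk X 1 n \<omega>)) / ln (real n)) powr q) \<le> B"
proof -
  interpret prob_space M by fact
  obtain c K where "c < 1" "energy_bounded M X c K"
    using assms(4) by (auto simp: finite_energy_iff_energy_bounded)
  then have E: "energy_bounded M X (max c (1/2)) (max K 2)"
    and c: "0 < max c (1/2)" "max c (1/2) < 1"
    using energy_bounded_normalize[OF assms(2)] by auto
  have K: "0 \<le> max K 2" by simp
  show ?thesis
    using expectation_maxrep_ratio_le[OF assms(2) E c K assms(5)] by blast
qed

end
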